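(* Fix $p\ge2$ and positive integers $\ell,t$. For each $n$ let $\mathcal{C}_n\subseteq\mathbb{Z}_p^n$ be a $t$-tandem-duplication-correcting code with respect to duplication length $\ell$. Then $$\limsup_{n\to\infty}\frac{|\mathcal{C}_n|}{\;t!\,p^{n+t(\ell+1)}/(n(p-1))^t\;}\le 1.$$
   Context: $\mathbb{Z}_p=\{0,1,\dots,p-1\}$. For a word $\mathbf{x}$ over $\mathbb{Z}_p$ and $0\le i\le|\mathbf{x}|-\ell$, write $\mathbf{x}=\mathbf{u}\mathbf{v}\mathbf{w}$ with $|\mathbf{u}|=i$, $|\mathbf{v}|=\ell$; the tandem duplication of length $\ell$ at position $i$ produces $\mathbf{u}\mathbf{v}\mathbf{v}\mathbf{w}$. The ball $B_t^{\tau_\ell}(\mathbf{x})$ is the set of words obtainable from $\mathbf{x}$ by at most $t$ successive tandem duplications of length $\ell$. A code $\mathcal{C}\subseteq\mathbb{Z}_p^n$ is $t$-tandem-duplication-correcting (duplication length $\ell$) if $B_t^{\tau_\ell}(\mathbf{c})\cap B_t^{\tau_\ell}(\mathbf{c}')=\emptyset$ for all distinct $\mathbf{c},\mathbf{c}'\in\mathcal{C}$. *)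

theory Defs
  imports Complex_Main "HOL-Library.Extended_Real"
begin

definition Zp_words :: "nat \<Rightarrow> nat \<Rightarrow> nat list set" where
  "Zp_words p n = {x. length x = n \<and> set x \<subseteq> {0..<p}}"

definition tandem_dup :: "nat \<Rightarrow> nat \<Rightarrow> 'a list \<Rightarrow> 'a list" where
  "tandem_dup l i x = take i x @ take l (drop i x) @ drop i x"

definition dup_step :: "nat \<Rightarrow> 'a list \<Rightarrow> 'a list \<Rightarrow> bool" where
  "dup_step l x y \<longleftrightarrow> (\<exists>i. i + l \<le> length x \<and> y = tandem_dup l i x)"

definition dup_ball :: "nat \<Rightarrow> nat \<Rightarrow> 'a list \<Rightarrow> 'a list set" where
  "dup_ball l t x = {y. \<exists>k\<le>t. (dup_step l ^^ k) x y}"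

definition tdc_code :: "nat \<Rightarrow> nat \<Rightarrow> nat \<Rightarrow> nat \<Rightarrow> nat list set \<Rightarrow> bool" where
  "tdc_code p n l t C \<longleftrightarrow> C \<subseteq> Zp_words p n \<and>
     (\<forall>c\<in>C. \<forall>c'\<in>C. c \<noteq> c' \<longrightarrow> dup_ball l t c \<inter> dup_ball l t c' = {})"

end

(*
  A codeword c with k(c) mismatch positions i, where c_i differs from c_(i+l), has at least
  k(c)^t / t! descendants of length n + l t: chains of duplications at mismatch positions
  produce pairwise distinct words. The balls of a code being disjoint, the sum of k(c)^t / t!
  over the code is at most p^(n + l t), so (Markov) at most t! p^(n + l t) / (delta n)^t
  codewords have delta n or more mismatches. For a uniformly random word the mismatch count is
  binomial with parameters n - l and (p - 1) / p, so for delta < (p - 1) / p a Chernoff bound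
  makes the words with fewer mismatches an exponentially small fraction of all p^n words.
  Letting delta tend to (p - 1) / p gives the asymptotic bound.
*)
theory Submission
  imports Defs
begin

definition shift_mismatches :: "nat \<Rightarrow> 'a list \<Rightarrow> nat set" where
  "shift_mismatches l x = {g. g + l < length x \<and> x ! g \<noteq> x ! (g + l)}"

text \<open>Positions in a chain are relative: after duplicating the block at \<open>g\<close>, the remaining
  duplications act on \<open>drop g x\<close>, that is, on the second copy of the block and what follows it.\<close>
fun dup_chain :: "nat \<Rightarrow> 'a list \<Rightarrow> nat list \<Rightarrow> 'a list" where
  "dup_chain l x [] = x"
| "dup_chain l x (g # gs) = take (g + l) x @ dup_chain l (drop g x) gs"

fun admissible_chain :: "nat \<Rightarrow> 'a list \<Rightarrow> nat list \<Rightarrow> bool" where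
  "admissible_chain l x [] = True"
| "admissible_chain l x (g # gs) \<longleftrightarrow>
     g \<in> shift_mismatches l x \<and> admissible_chain l (drop g x) gs"

definition admissible_chains :: "nat \<Rightarrow> 'a list \<Rightarrow> nat \<Rightarrow> nat list set" where
  "admissible_chains l x t = {gs. length gs = t \<and> admissible_chain l x gs}"

lemma finite_shift_mismatches: "finite (shift_mismatches l x)"
  unfolding shift_mismatches_def by (rule finite_subset[of _ "{..<length x}"]) auto

lemma length_dup_chain:
  "admissible_chain l x gs \<Longrightarrow> length (dup_chain l x gs) = length x + l * length gs"
  by (induction gs arbitrary: x) (auto simp: shift_mismatches_def)

lemma set_dup_chain_subset: "set (dup_chain l x gs) \<subseteq> set x"
proof (induction gs arbitrary: x)
  case (Cons g gs)
  then show ?case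
    using set_take_subset[of "g + l" x] set_drop_subset[of g x] by fastforce
qed simp

lemma take_dup_chain: "admissible_chain l x gs \<Longrightarrow> take l (dup_chain l x gs) = take l x"
  by (cases gs) (auto simp: shift_mismatches_def)

lemma nth_dup_chain_Cons:
  assumes "admissible_chain l x (g # gs)" and "0 < l"
  shows "dup_chain l x (g # gs) ! (g + l) = x ! g"
proof -
  have g: "g + l < length x" and adm: "admissible_chain l (drop g x) gs"
    using assms(1) by (auto simp: shift_mismatches_def)
  have "dup_chain l x (g # gs) ! (g + l) = take l (dup_chain l (drop g x) gs) ! 0"
    using g assms(2) length_dup_chain[OF adm] by (simp add: nth_append)
  also have "\<dots> = x ! g"
    using g assms(2) by (simp add: take_dup_chain[OF adm])
  finally show ?thesis .
qed

text \<open>Duplicating at a mismatch position \<open>g\<close> puts \<open>x ! g\<close> where \<open>x ! (g + l)\<close> used to be,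
  and a later first position leaves that entry untouched.\<close>
lemma dup_chain_Cons_neq:
  assumes "admissible_chain l x (g # gs)" "admissible_chain l x (h # hs)" "g < h" "0 < l"
  shows "dup_chain l x (g # gs) \<noteq> dup_chain l x (h # hs)"
proof -
  have mis: "x ! g \<noteq> x ! (g + l)" and h: "h + l < length x"
    using assms(1,2) by (auto simp: shift_mismatches_def)
  have "dup_chain l x (h # hs) ! (g + l) = x ! (g + l)"
    using assms(3) h by (simp add: nth_append)
  then show ?thesis
    using nth_dup_chain_Cons[OF assms(1,4)] mis by metis
qed

lemma inj_on_dup_chain:
  assumes "0 < l"
  shows "inj_on (dup_chain l x) (admissible_chains l x t)"
proof -
  have "gs = hs"
    if "admissible_chain l x gs" "admissible_chain l x hs" "length gs = length hs"
       "dup_chain l x gs = dup_chain l x hs" for gs hs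
    using that
  proof (induction gs arbitrary: x hs)
    case (Cons g gs)
    then obtain h hs' where hs: "hs = h # hs'" by (cases hs) auto
    consider "g = h" | "g < h" | "h < g" by linarith
    then show ?case
    proof cases
      case 1
      then show ?thesis using Cons.IH[of "drop g x" hs'] Cons.prems hs by simp
    qed (use dup_chain_Cons_neq assms Cons.prems hs in metis)+
  qed simp
  then show ?thesis by (auto simp: inj_on_def admissible_chains_def)
qed

lemma dup_steps_append_left:
  "(dup_step l ^^ m) z z' \<Longrightarrow> (dup_step l ^^ m) (w @ z) (w @ z')"
proof (induction m arbitrary: z')
  case (Suc m)
  then obtain y where "(dup_step l ^^ m) z y" "dup_step l y z'"
    by (auto elim: relpowp_Suc_E)
  moreover have "dup_step l (w @ y) (w @ z')" if step: "dup_step l y z'"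
  proof -
    obtain i where "i + l \<le> length y" "z' = tandem_dup l i y"
      using step by (auto simp: dup_step_def)
    then have "length w + i + l \<le> length (w @ y)" "w @ z' = tandem_dup l (length w + i) (w @ y)"
      by (simp_all add: tandem_dup_def)
    then show ?thesis unfolding dup_step_def by blast
  qed
  ultimately show ?case using Suc.IH by (meson relpowp_Suc_I)
qed simp

text \<open>The first duplication of a chain is performed last, on the prefix \<open>take g x\<close>
  followed by the already duplicated suffix, whose first \<open>l\<close> letters are those of \<open>drop g x\<close>.\<close>
lemma dup_chain_reachable:
  "admissible_chain l x gs \<Longrightarrow> (dup_step l ^^ length gs) x (dup_chain l x gs)"
proof (induction gs arbitrary: x)
  case (Cons g gs)
  define B where "B = dup_chain l (drop g x) gs"
  have g: "g + l < length x" and adm: "admissible_chain l (drop g x) gs"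
    using Cons.prems by (auto simp: shift_mismatches_def)
  have "(dup_step l ^^ length gs) (take g x @ drop g x) (take g x @ B)"
    unfolding B_def by (rule dup_steps_append_left[OF Cons.IH[OF adm]])
  moreover have "dup_step l (take g x @ B) (dup_chain l x (g # gs))"
  proof -
    have "length B \<ge> l" "take l B = take l (drop g x)"
      using length_dup_chain[OF adm] take_dup_chain[OF adm] g by (simp_all add: B_def)
    then have "g + l \<le> length (take g x @ B)"
        "dup_chain l x (g # gs) = tandem_dup l g (take g x @ B)"
      using g by (simp_all add: tandem_dup_def B_def take_add)
    then show ?thesis unfolding dup_step_def by blast
  qed
  ultimately show ?case by (metis append_take_drop_id length_Cons relpowp_Suc_I)
qed simp

lemma admissible_chains_0: "admissible_chains l x 0 = {[]}"
  by (auto simp: admissible_chains_def)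

lemma admissible_chains_Suc:
  "admissible_chains l x (Suc t) =
     (\<Union>g\<in>shift_mismatches l x. (#) g ` admissible_chains l (drop g x) t)"
  by (auto simp: admissible_chains_def length_Suc_conv)

lemma finite_admissible_chains: "finite (admissible_chains l x t)"
  by (induction t arbitrary: x)
     (simp_all add: admissible_chains_0 admissible_chains_Suc finite_shift_mismatches)

lemma card_admissible_chains_Suc:
  "card (admissible_chains l x (Suc t)) =
     (\<Sum>g\<in>shift_mismatches l x. card (admissible_chains l (drop g x) t))"
  unfolding admissible_chains_Suc
  by (subst card_UN_disjoint)
     (auto simp: finite_shift_mismatches finite_admissible_chains card_image)

lemma card_shift_mismatches_drop:
  "card (shift_mismatches l (drop g x)) = card {j \<in> shift_mismatches l x. g \<le> j}"
proof -
  have "{j \<in> shift_mismatches l x. g \<le> j} = (\<lambda>j. j + g) ` shift_mismatches l (drop g x)"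
  proof (rule set_eqI)
    fix j
    show "j \<in> {j \<in> shift_mismatches l x. g \<le> j} \<longleftrightarrow> j \<in> (\<lambda>j. j + g) ` shift_mismatches l (drop g x)"
      by (cases "g \<le> j")
         (auto simp: shift_mismatches_def image_iff add.commute add.left_commute
               intro!: exI[of _ "j - g"])
  qed
  then show ?thesis by (simp add: card_image)
qed

lemma sum_upper_rank:
  fixes f :: "nat \<Rightarrow> 'b::comm_monoid_add" and P :: "'a::linorder set"
  assumes "finite P"
  shows "(\<Sum>g\<in>P. f (card {j \<in> P. g \<le> j})) = (\<Sum>i=1..card P. f i)"
  using assms
proof (induction "card P" arbitrary: P)
  case (Suc n)
  define m where "m = Min P"
  have m: "m \<in> P" "\<And>j. j \<in> P \<Longrightarrow> m \<le> j"
    using Suc m_def by (auto intro: Min_in)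
  have upper: "{j \<in> P. g \<le> j} = {j \<in> P - {m}. g \<le> j}" if "g \<in> P - {m}" for g
    using that m by force
  have "(\<Sum>g\<in>P. f (card {j \<in> P. g \<le> j}))
      = f (card {j \<in> P. m \<le> j}) + (\<Sum>g\<in>P - {m}. f (card {j \<in> P. g \<le> j}))"
    by (rule sum.remove[OF Suc.prems m(1)])
  also have "{j \<in> P. m \<le> j} = P"
    using m by auto
  also have "(\<Sum>g\<in>P - {m}. f (card {j \<in> P. g \<le> j}))
      = (\<Sum>g\<in>P - {m}. f (card {j \<in> P - {m}. g \<le> j}))"
    by (rule sum.cong[OF refl]) (simp only: upper)
  also have "(\<Sum>g\<in>P - {m}. f (card {j \<in> P - {m}. g \<le> j})) = (\<Sum>i=1..n. f i)"
    using Suc.hyps(1)[of "P - {m}"] Suc.hyps(2) Suc.prems m(1)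
    by (metis card_Diff_singleton diff_Suc_1 finite_Diff)
  finally show ?case
    using Suc.hyps(2)[symmetric] by (simp add: add.commute)
qed simp

lemma power_Suc_diff_le:
  fixes a b :: "'a::linordered_idom"
  assumes "0 \<le> b" "b \<le> a"
  shows "a ^ Suc t - b ^ Suc t \<le> of_nat (Suc t) * (a - b) * a ^ t"
proof -
  have "a ^ Suc t - b ^ Suc t = (a - b) * (\<Sum>i<Suc t. a ^ i * b ^ (t - i))"
    by (rule diff_power_eq_sum)
  also have "\<dots> \<le> (a - b) * (\<Sum>i<Suc t. a ^ t)"
  proof (intro mult_left_mono sum_mono)
    fix i assume "i \<in> {..<Suc t}"
    then have "a ^ i * b ^ (t - i) \<le> a ^ i * a ^ (t - i)"
      using assms by (intro mult_left_mono power_mono) auto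
    also have "\<dots> = a ^ t" using \<open>i \<in> {..<Suc t}\<close> by (simp flip: power_add)
    finally show "a ^ i * b ^ (t - i) \<le> a ^ t" .
  qed (use assms in simp)
  also have "\<dots> = of_nat (Suc t) * (a - b) * a ^ t"
    by simp
  finally show ?thesis .
qed

lemma sum_powers_ge: "real k ^ Suc t / real (Suc t) \<le> (\<Sum>i=1..k. real i ^ t)"
proof (induction k)
  case (Suc k)
  have "real (Suc k) ^ Suc t - real k ^ Suc t \<le> real (Suc t) * real (Suc k) ^ t"
    using power_Suc_diff_le[of "real k" "real (Suc k)" t] by simp
  then have "real (Suc k) ^ Suc t / real (Suc t)
      \<le> (real k ^ Suc t + real (Suc t) * real (Suc k) ^ t) / real (Suc t)"
    by (intro divide_right_mono) simp_all
  also have "\<dots> = real k ^ Suc t / real (Suc t) + real (Suc k) ^ t"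
    by (simp add: add_divide_distrib)
  finally show ?case using Suc.IH by simp
qed simp

text \<open>Admissible chains amount to multisets of \<open>t\<close> mismatch positions: a chain starting at the
  \<open>i\<close>-th largest mismatch position continues with chains over exactly \<open>i\<close> positions.\<close>
lemma card_admissible_chains_ge:
  "real (card (shift_mismatches l x)) ^ t / fact t \<le> real (card (admissible_chains l x t))"
proof (induction t arbitrary: x)
  case 0
  then show ?case by (simp add: admissible_chains_0)
next
  case (Suc t)
  let ?P = "shift_mismatches l x"
  have "real (card ?P) ^ Suc t / fact (Suc t) = real (card ?P) ^ Suc t / real (Suc t) / fact t"
    by (simp add: fact_Suc)
  also have "\<dots> \<le> (\<Sum>i=1..card ?P. real i ^ t) / fact t"
    using sum_powers_ge by (intro divide_right_mono) simp_all
  also have "\<dots> = (\<Sum>i=1..card ?P. real i ^ t / fact t)"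
    by (simp add: sum_divide_distrib)
  also have "\<dots> = (\<Sum>g\<in>?P. real (card {j \<in> ?P. g \<le> j}) ^ t / fact t)"
    by (rule sum_upper_rank[OF finite_shift_mismatches, symmetric])
  also have "\<dots> \<le> (\<Sum>g\<in>?P. real (card (admissible_chains l (drop g x) t)))"
    by (intro sum_mono) (metis Suc.IH card_shift_mismatches_drop)
  also have "\<dots> = real (card (admissible_chains l x (Suc t)))"
    by (simp add: card_admissible_chains_Suc)
  finally show ?case .
qed

lemma finite_Zp_words: "finite (Zp_words p n)"
  using finite_lists_length_eq[of "{0..<p}" n] by (simp add: Zp_words_def conj_commute)

lemma card_Zp_words: "card (Zp_words p n) = p ^ n"
  using card_lists_length_eq[of "{0..<p}" n] by (simp add: Zp_words_def conj_commute)

lemma Zp_words_Suc: "Zp_words p (Suc n) = (\<lambda>(x, a). x @ [a]) ` (Zp_words p n \<times> {0..<p})"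
proof (rule set_eqI, rule iffI)
  fix y assume y: "y \<in> Zp_words p (Suc n)"
  then have "y \<noteq> []" by (auto simp: Zp_words_def)
  then have "y = butlast y @ [last y]" "butlast y \<in> Zp_words p n" "last y \<in> {0..<p}"
    using y last_in_set[of y] by (auto simp: Zp_words_def subset_iff dest: in_set_butlastD)
  then show "y \<in> (\<lambda>(x, a). x @ [a]) ` (Zp_words p n \<times> {0..<p})"
    by (metis (no_types, lifting) SigmaI image_eqI case_prod_conv)
qed (auto simp: Zp_words_def)

lemma card_dup_ball_ge:
  assumes "c \<in> Zp_words p n" "0 < l"
  shows "real (card (shift_mismatches l c)) ^ t / fact t
           \<le> real (card (dup_ball l t c \<inter> Zp_words p (n + l * t)))"
proof -
  have "dup_chain l c ` admissible_chains l c t \<subseteq> dup_ball l t c \<inter> Zp_words p (n + l * t)"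
  proof
    fix y assume "y \<in> dup_chain l c ` admissible_chains l c t"
    then obtain gs where gs: "length gs = t" "admissible_chain l c gs" "y = dup_chain l c gs"
      by (auto simp: admissible_chains_def)
    then have "y \<in> dup_ball l t c"
      using dup_chain_reachable[OF gs(2)] by (auto simp: dup_ball_def)
    moreover have "y \<in> Zp_words p (n + l * t)"
      using length_dup_chain[OF gs(2)] set_dup_chain_subset[of l c gs] gs assms(1)
      by (auto simp: Zp_words_def)
    ultimately show "y \<in> dup_ball l t c \<inter> Zp_words p (n + l * t)" by simp
  qed
  then have "card (admissible_chains l c t) \<le> card (dup_ball l t c \<inter> Zp_words p (n + l * t))"
    using card_image[OF inj_on_dup_chain[OF assms(2)]]
    by (metis card_mono finite_Int finite_Zp_words)
  then show ?thesis
    using card_admissible_chains_ge[of l c t] by linarith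
qed

lemma sum_card_shift_mismatches_power_le:
  assumes "tdc_code p n l t C" "0 < l"
  shows "(\<Sum>c\<in>C. real (card (shift_mismatches l c)) ^ t / fact t) \<le> real p ^ (n + l * t)"
proof -
  let ?B = "\<lambda>c. dup_ball l t c \<inter> Zp_words p (n + l * t)"
  have CW: "C \<subseteq> Zp_words p n"
    and disj: "\<And>c c'. c \<in> C \<Longrightarrow> c' \<in> C \<Longrightarrow> c \<noteq> c' \<Longrightarrow> ?B c \<inter> ?B c' = {}"
    using assms(1) by (auto simp: tdc_code_def)
  then have fin: "finite C"
    using finite_Zp_words finite_subset by blast
  have "(\<Sum>c\<in>C. real (card (shift_mismatches l c)) ^ t / fact t) \<le> (\<Sum>c\<in>C. real (card (?B c)))"
    using card_dup_ball_ge assms(2) CW by (intro sum_mono) blast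
  also have "\<dots> = real (card (\<Union>c\<in>C. ?B c))"
    using disj fin by (subst card_UN_disjoint) (auto simp: finite_Zp_words)
  also have "\<dots> \<le> real (card (Zp_words p (n + l * t)))"
    by (intro of_nat_mono card_mono finite_Zp_words) auto
  finally show ?thesis by (simp add: card_Zp_words)
qed

lemma card_shift_mismatches_snoc:
  assumes "l \<le> length x" "0 < l"
  shows "card (shift_mismatches l (x @ [a])) =
           card (shift_mismatches l x) + (if x ! (length x - l) \<noteq> a then 1 else 0)"
proof -
  have "shift_mismatches l (x @ [a]) =
          shift_mismatches l x \<union> (if x ! (length x - l) \<noteq> a then {length x - l} else {})"
  proof (rule set_eqI)
    fix g
    consider "g + l < length x" | "g = length x - l" | "length x < g + l"
      using assms(1) by linarith
    then show "g \<in> shift_mismatches l (x @ [a]) \<longleftrightarrow>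
        g \<in> shift_mismatches l x \<union> (if x ! (length x - l) \<noteq> a then {length x - l} else {})"
      by cases (use assms in \<open>auto simp: shift_mismatches_def nth_append\<close>)
  qed
  moreover have "length x - l \<notin> shift_mismatches l x"
    using assms by (auto simp: shift_mismatches_def)
  ultimately show ?thesis
    by (simp add: finite_shift_mismatches)
qed

text \<open>Appending a letter adds a mismatch for all but one of the \<open>p\<close> choices,
  so the generating function of the number of mismatches factors.\<close>
lemma sum_Zp_words_power_shift_mismatches:
  fixes z :: real
  assumes "0 < l"
  shows "(\<Sum>x\<in>Zp_words p (l + d). z ^ card (shift_mismatches l x))
           = real p ^ l * (1 + real (p - 1) * z) ^ d"
proof (induction d)
  case 0
  have "shift_mismatches l x = {}" if "x \<in> Zp_words p l" for x
    using that by (auto simp: shift_mismatches_def Zp_words_def)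
  then show ?case by (simp add: card_Zp_words)
next
  case (Suc d)
  have letter: "(\<Sum>a\<in>{0..<p}. z ^ card (shift_mismatches l (x @ [a])))
                  = z ^ card (shift_mismatches l x) * (1 + real (p - 1) * z)"
    if x: "x \<in> Zp_words p (l + d)" for x
  proof -
    let ?b = "x ! d"
    have b: "?b \<in> {0..<p}" and len: "length x - l = d" "l \<le> length x"
      using x assms nth_mem[of d x] by (auto simp: Zp_words_def subset_iff)
    have "(\<Sum>a\<in>{0..<p}. z ^ card (shift_mismatches l (x @ [a])))
            = (\<Sum>a\<in>{0..<p}. z ^ card (shift_mismatches l x) * (if ?b \<noteq> a then z else 1))"
      using card_shift_mismatches_snoc[OF len(2) assms] len(1)
      by (intro sum.cong refl) simp
    also have "\<dots> = z ^ card (shift_mismatches l x) * (\<Sum>a\<in>{0..<p}. if ?b \<noteq> a then z else 1)"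
      by (simp add: sum_distrib_left)
    also have "(\<Sum>a\<in>{0..<p}. if ?b \<noteq> a then z else 1) = 1 + real (p - 1) * z"
    proof -
      have "{0..<p} \<inter> {a. ?b \<noteq> a} = {0..<p} - {?b}" "{0..<p} \<inter> - {a. ?b \<noteq> a} = {?b}"
        using b by auto
      then show ?thesis
        using b by (simp add: sum.If_cases)
    qed
    finally show ?thesis .
  qed
  have "(\<Sum>y\<in>Zp_words p (l + Suc d). z ^ card (shift_mismatches l y))
      = (\<Sum>x\<in>Zp_words p (l + d). \<Sum>a\<in>{0..<p}. z ^ card (shift_mismatches l (x @ [a])))"
    by (simp add: Zp_words_Suc sum.reindex inj_on_def sum.cartesian_product case_prod_unfold)
  also have "\<dots> = real p ^ l * (1 + real (p - 1) * z) ^ Suc d"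
    using Suc.IH by (simp add: letter sum_distrib_right[symmetric])
  finally show ?case .
qed

lemma one_le_markov_plus_chernoff:
  fixes z K :: real
  assumes "0 < K" "0 < z" "z \<le> 1"
  shows "1 \<le> (real k / K) ^ t + z ^ k * z powr (- K)"
proof (cases "K \<le> real k")
  case True
  then have "1 \<le> (real k / K) ^ t"
    using assms by (intro one_le_power) simp
  then show ?thesis
    using assms by (simp add: add_increasing2)
next
  case False
  have "1 \<le> z powr (real k - K)"
    using False assms powr_mono2'[of "real k - K" z 1] by simp
  also have "\<dots> = z ^ k * z powr (- K)"
    using assms by (simp add: powr_realpow[symmetric] powr_add[symmetric])
  finally show ?thesis
    using assms by (simp add: add_increasing)
qed

lemma card_tdc_code_le:
  fixes z K :: real
  assumes code: "tdc_code p n l t C" and "0 < l" "l \<le> n" "0 < K" "0 < z" "z \<le> 1"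
  shows "real (card C) \<le> fact t * real p ^ (n + l * t) / K ^ t
           + z powr (- K) * (real p ^ l * (1 + real (p - 1) * z) ^ (n - l))"
proof -
  let ?k = "\<lambda>c. card (shift_mismatches l c)"
  have CW: "C \<subseteq> Zp_words p n"
    using code by (simp add: tdc_code_def)
  have "real (card C) = (\<Sum>c\<in>C. 1)"
    by simp
  also have "\<dots> \<le> (\<Sum>c\<in>C. (real (?k c) / K) ^ t + z ^ ?k c * z powr (- K))"
    using one_le_markov_plus_chernoff[OF assms(4-6)] by (intro sum_mono)
  also have "\<dots> = fact t / K ^ t * (\<Sum>c\<in>C. real (?k c) ^ t / fact t)
                   + z powr (- K) * (\<Sum>c\<in>C. z ^ ?k c)"
    by (simp add: sum.distrib sum_distrib_left sum_distrib_right power_divide mult.commute)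
  also have "\<dots> \<le> fact t / K ^ t * real p ^ (n + l * t)
                   + z powr (- K) * (\<Sum>c\<in>Zp_words p n. z ^ ?k c)"
    using sum_card_shift_mismatches_power_le[OF code assms(2)] CW assms(4,5)
    by (intro add_mono mult_left_mono sum_mono2 finite_Zp_words) auto
  also have "(\<Sum>c\<in>Zp_words p n. z ^ ?k c) = real p ^ l * (1 + real (p - 1) * z) ^ (n - l)"
    using sum_Zp_words_power_shift_mismatches[OF assms(2), where p=p and z=z and d="n - l"] assms(3)
    by simp
  finally show ?thesis by simp
qed

lemma tdc_code_ratio_le:
  fixes \<delta> z :: real
  assumes code: "tdc_code p n l t C" and "2 \<le> p" "0 < l" "l \<le> n" "0 < \<delta>" "0 < z" "z \<le> 1"
  defines "P \<equiv> real p"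
  shows "real (card C) / (fact t * P ^ (n + t * (l + 1)) / (real n * real (p - 1)) ^ t)
    \<le> ((P - 1) / (P * \<delta>)) ^ t
      + (P - 1) ^ t / (fact t * P ^ (t * (l + 1)) * ((1 + (P - 1) * z) / P) ^ l)
        * (real n ^ t * (z powr (- \<delta>) * (1 + (P - 1) * z) / P) ^ n)"
proof -
  define B where "B = 1 + (P - 1) * z"
  define D where "D = fact t * P ^ (n + t * (l + 1)) / (real n * (P - 1)) ^ t"
  have P: "1 < P" "real (p - 1) = P - 1"
    using assms(2) by (simp_all add: P_def of_nat_diff)
  have n: "0 < real n"
    using assms(3,4) by simp
  have B: "0 < B"
    using P assms(6) by (simp add: B_def add_pos_nonneg)
  have D: "0 < D"
    using P n by (simp add: D_def)
  have "real (card C) \<le> fact t * P ^ (n + l * t) / (\<delta> * real n) ^ t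
          + z powr (- (\<delta> * real n)) * (P ^ l * B ^ (n - l))"
    using card_tdc_code_le[OF code assms(3,4) _ assms(6,7), of "\<delta> * real n"] assms(5) n P
    by (simp add: P_def B_def)
  then have "real (card C) / D \<le> fact t * P ^ (n + l * t) / (\<delta> * real n) ^ t / D
          + z powr (- (\<delta> * real n)) * (P ^ l * B ^ (n - l)) / D"
    using D by (metis add_divide_distrib divide_right_mono less_imp_le)
  also have "fact t * P ^ (n + l * t) / (\<delta> * real n) ^ t / D = ((P - 1) / (P * \<delta>)) ^ t"
  proof -
    have "P ^ (n + t * (l + 1)) = P ^ (n + l * t) * P ^ t"
      by (simp add: power_add[symmetric] algebra_simps)
    then show ?thesis
      unfolding D_def power_mult_distrib power_divide using P(1) n assms(5) by (simp add: field_simps)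
  qed
  also have "z powr (- (\<delta> * real n)) * (P ^ l * B ^ (n - l)) / D
      = (P - 1) ^ t / (fact t * P ^ (t * (l + 1)) * (B / P) ^ l)
          * (real n ^ t * (z powr (- \<delta>) * B / P) ^ n)"
  proof -
    have "z powr (- (\<delta> * real n)) = (z powr (- \<delta>)) ^ n"
      using assms(6) by (simp add: powr_realpow[symmetric] powr_powr mult.commute)
    moreover have "B ^ (n - l) = B ^ n / B ^ l"
      using B assms(4) by (simp add: power_diff)
    moreover have "P ^ (n + t * (l + 1)) = P ^ n * P ^ (t * (l + 1))"
      by (simp add: power_add)
    ultimately show ?thesis
      unfolding D_def power_mult_distrib power_divide using P(1) n B by (simp add: field_simps)
  qed
  finally show ?thesis
    unfolding D_def B_def P(2) .
qed

text \<open>At \<open>z = 1\<close> the rate equals \<open>1\<close> and its derivative is \<open>(P - 1) / P - \<delta> > 0\<close>,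
  so it drops below \<open>1\<close> just to the left of \<open>z = 1\<close>.\<close>
lemma exists_chernoff_rate_lt_1:
  fixes P \<delta> :: real
  assumes "0 < \<delta>" "\<delta> < (P - 1) / P" "1 < P"
  shows "\<exists>z. 0 < z \<and> z < 1 \<and> z powr (- \<delta>) * (1 + (P - 1) * z) / P < 1"
proof -
  let ?g = "\<lambda>z::real. z powr (- \<delta>) * (1 + (P - 1) * z)"
  have "(?g has_real_derivative P - 1 - \<delta> * P) (at 1)"
    by (auto intro!: derivative_eq_intros simp: algebra_simps)
  moreover have "0 < P - 1 - \<delta> * P"
    using assms by (simp add: field_simps)
  ultimately obtain d where d: "d > 0" "\<And>h. h > 0 \<Longrightarrow> h < d \<Longrightarrow> ?g (1 - h) < ?g 1"
    using DERIV_pos_inc_left by blast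
  define h where "h = min (d / 2) (1 / 2)"
  have "0 < h" "h < d" "h < 1"
    using d(1) by (auto simp: h_def)
  moreover have "?g 1 = P"
    by simp
  ultimately show ?thesis
    using d(2) assms(3) by (intro exI[of _ "1 - h"]) auto
qed

lemma tendsto_power_mult_geometric_0:
  fixes r :: real
  assumes "0 < r" "r < 1"
  shows "(\<lambda>n. real n ^ t * r ^ n) \<longlonglongrightarrow> 0"
proof (cases "t = 0")
  case True
  then show ?thesis using assms by (simp add: LIMSEQ_power_zero)
next
  case False
  define s where "s = r powr (1 / real t)"
  have s: "0 < s" "s < 1" "s ^ t = r"
    using assms False powr_less_mono2[of "1 / real t" r 1]
    by (simp_all add: s_def powr_realpow[symmetric] powr_powr)
  have "(\<lambda>n. (real n * s ^ n) ^ t) \<longlonglongrightarrow> 0 ^ t"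
    using powser_times_n_limit_0[of s] s by (intro tendsto_intros) auto
  moreover have "(real n * s ^ n) ^ t = real n ^ t * r ^ n" for n
    by (simp add: power_mult_distrib s(3)[symmetric] power_mult[symmetric] mult.commute)
  ultimately show ?thesis
    using False by (simp add: power_0_left)
qed

lemma limsup_le_of_le_plus_tendsto_0:
  fixes f g :: "nat \<Rightarrow> real"
  assumes "eventually (\<lambda>n. f n \<le> a + c * g n) sequentially" "g \<longlonglongrightarrow> 0"
  shows "limsup (\<lambda>n. ereal (f n)) \<le> ereal a"
proof -
  have "limsup (\<lambda>n. ereal (f n)) \<le> limsup (\<lambda>n. ereal (a + c * g n))"
    using assms(1) by (intro Limsup_mono) (simp add: eventually_mono)
  also have "\<dots> = ereal (a + c * 0)"
    using assms(2) by (intro lim_imp_Limsup tendsto_ereal tendsto_intros) auto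
  finally show ?thesis by simp
qed

lemma limsup_tdc_code_ratio_le:
  fixes \<delta> :: real
  assumes "2 \<le> p" "0 < l" "\<And>n. tdc_code p n l t (C n)"
    and "0 < \<delta>" "\<delta> < (real p - 1) / real p"
  shows "limsup (\<lambda>n. ereal (real (card (C n)) /
           (fact t * real p ^ (n + t * (l + 1)) / (real n * real (p - 1)) ^ t)))
         \<le> ereal (((real p - 1) / (real p * \<delta>)) ^ t)"
proof -
  obtain z where z: "0 < z" "z < 1" and rate: "z powr (- \<delta>) * (1 + (real p - 1) * z) / real p < 1"
    using exists_chernoff_rate_lt_1[OF assms(4,5)] assms(1) by auto
  have "0 < 1 + (real p - 1) * z"
    using assms(1) z by (simp add: add_pos_nonneg)
  then have "0 < z powr (- \<delta>) * (1 + (real p - 1) * z) / real p"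
    using assms(1) z by simp
  then have lim: "(\<lambda>n. real n ^ t * (z powr (- \<delta>) * (1 + (real p - 1) * z) / real p) ^ n)
      \<longlonglongrightarrow> 0"
    using rate by (rule tendsto_power_mult_geometric_0)
  show ?thesis
    by (rule limsup_le_of_le_plus_tendsto_0[OF eventually_sequentiallyI[of l] lim])
       (rule tdc_code_ratio_le[OF assms(3) assms(1,2) _ assms(4) z(1) less_imp_le[OF z(2)]])
qed

theorem corollary1:
  fixes p l t :: nat and C :: "nat \<Rightarrow> nat list set"
  assumes "p \<ge> 2" and "l > 0" and "t > 0"
    and "\<And>n. tdc_code p n l t (C n)"
  shows "limsup (\<lambda>n. ereal (real (card (C n)) /
           (fact t * real p ^ (n + t * (l + 1)) / (real n * real (p - 1)) ^ t))) \<le> 1"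
proof -
  define \<delta>\<^sub>0 where "\<delta>\<^sub>0 = (real p - 1) / real p"
  have bound: "limsup (\<lambda>n. ereal (real (card (C n)) /
        (fact t * real p ^ (n + t * (l + 1)) / (real n * real (p - 1)) ^ t)))
      \<le> ereal (((real p - 1) / (real p * \<delta>)) ^ t)" if "\<delta> \<in> {0<..<\<delta>\<^sub>0}" for \<delta>
    by (rule limsup_tdc_code_ratio_le[OF assms(1,2,4)]) (use that in \<open>auto simp: \<delta>\<^sub>0_def\<close>)
  have "0 < \<delta>\<^sub>0"
    using assms(1) by (simp add: \<delta>\<^sub>0_def)
  have "((\<lambda>\<delta>. ((real p - 1) / (real p * \<delta>)) ^ t)
          \<longlongrightarrow> ((real p - 1) / (real p * \<delta>\<^sub>0)) ^ t) (at_left \<delta>\<^sub>0)"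
    using assms(1) by (intro tendsto_intros) (auto simp: \<delta>\<^sub>0_def)
  moreover have "((real p - 1) / (real p * \<delta>\<^sub>0)) ^ t = 1"
    using assms(1) by (simp add: \<delta>\<^sub>0_def)
  ultimately have "((\<lambda>\<delta>. ereal (((real p - 1) / (real p * \<delta>)) ^ t)) \<longlongrightarrow> 1) (at_left \<delta>\<^sub>0)"
    by (metis tendsto_ereal one_ereal_def)
  then show ?thesis
    using eventually_mono[OF eventually_at_left_real[OF \<open>0 < \<delta>\<^sub>0\<close>] bound] trivial_limit_at_left_real
    by (rule tendsto_lowerbound)
qed

end
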